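(* Let $y_1\sim\mathcal N(\mu_1,1)$ and $y_2\sim\mathcal N(\mu_2,1)$ be independent, $\hat\gamma=\arg\max_{\gamma\in\{1,2\}}y_\gamma$, and fix $\alpha\in(0,1)$, $\nu\in(0,\alpha)$. Define $\widehat\Gamma^+_\nu=\{1,2\}$ if $|y_2-y_1|\le2\sqrt2\,q^\nu(1)$ and $\widehat\Gamma^+_\nu=\{\hat\gamma\}$ otherwise. Then $$P\left\{\mu_{\hat\gamma}\in\left(y_{\hat\gamma}\pm q^{\alpha-\nu}(|\widehat\Gamma^+_\nu|)\right)\right\}\ge1-\alpha.$$
   Context: For $k\in\{1,2\}$ and $\beta\in(0,1)$, $q^\beta(k)$ denotes the $1-\beta$ quantile of $\max_{i\in[k]}|Z_i|$ with $Z_1,\dots,Z_k$ i.i.d. $\mathcal N(0,1)$. *)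

theory Defs
  imports "HOL-Probability.Probability"
begin

definition std_normal_measure :: "real measure" where
  "std_normal_measure = density lborel (\<lambda>x. ennreal (std_normal_density x))"

(* CDF of max_{i<k} |Z_i| with Z_0,...,Z_{k-1} iid N(0,1) *)
definition max_abs_cdf :: "nat \<Rightarrow> real \<Rightarrow> real" where
  "max_abs_cdf k t = measure (PiM {..<k} (\<lambda>_. std_normal_measure)) (PiE {..<k} (\<lambda>_. {-t..t}))"

definition q :: "real \<Rightarrow> nat \<Rightarrow> real" where
  "q \<beta> k = Inf {t. 1 - \<beta> \<le> max_abs_cdf k t}"

(* selected index gamma_hat = argmax_{gamma in {1,2}} y_gamma (ties -> 1, a null event) *)
definition gamma_hat :: "real \<Rightarrow> real \<Rightarrow> nat" where
  "gamma_hat y1 y2 = (if y2 \<le> y1 then 1 else 2)"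

definition Gamma_plus :: "real \<Rightarrow> real \<Rightarrow> real \<Rightarrow> nat set" where
  "Gamma_plus \<nu> y1 y2 =
     (if \<bar>y2 - y1\<bar> \<le> 2 * sqrt 2 * q \<nu> 1 then {1, 2} else {gamma_hat y1 y2})"

end

(*
  Put beta = alpha - nu and s = sqrt 2 * q^nu(1). Since y1 - y2 ~ N(mu1 - mu2, 2), the event
  |(y1 - y2) - (mu1 - mu2)| <= s has probability at least 1 - nu. On it:
  - if |mu1 - mu2| <= s, then |y2 - y1| <= 2 s, so both indices are retained and the half-width
    is q^beta(2); coverage follows once both |y_i - mu_i| < q^beta(2), which by independence has
    probability F(q^beta(2))^2 >= 1 - beta, F being the distribution function of |Z|;
  - otherwise the selected index is the one with the larger mean and the half-width is at least
    q^beta(1), so it suffices that this one observation lies within q^beta(1) of its mean.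
  In both cases the Bonferroni inequality gives 1 - nu - beta = 1 - alpha.
*)

theory Submission
  imports Defs
begin

definition central_mass :: "real \<Rightarrow> real" where
  "central_mass t = measure std_normal_measure {-t..t}"

lemma prob_space_std_normal_measure: "prob_space std_normal_measure"
  unfolding std_normal_measure_def by (rule prob_space_normal_density) simp

interpretation std_normal: prob_space std_normal_measure
  by (rule prob_space_std_normal_measure)

lemma sets_std_normal_measure [simp, measurable_cong]: "sets std_normal_measure = sets borel"
  unfolding std_normal_measure_def by simp

lemma max_abs_cdf_eq_power: "max_abs_cdf k t = central_mass t ^ k"
proof -
  interpret product_sigma_finite "\<lambda>_::nat. std_normal_measure"
    by unfold_locales
  interpret Pi: prob_space "PiM {..<k} (\<lambda>_. std_normal_measure)"
    by (rule prob_space_PiM) (rule std_normal.prob_space_axioms)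
  have "emeasure (PiM {..<k} (\<lambda>_. std_normal_measure)) (PiE {..<k} (\<lambda>_. {-t..t}))
      = (\<Prod>i\<in>{..<k}. emeasure std_normal_measure {-t..t})"
    by (rule emeasure_PiM) auto
  then show ?thesis
    by (simp add: max_abs_cdf_def central_mass_def Pi.emeasure_eq_measure
        std_normal.emeasure_eq_measure ennreal_power)
qed

lemma central_mass_nonneg: "0 \<le> central_mass t"
  by (simp add: central_mass_def)

lemma central_mass_le_1: "central_mass t \<le> 1"
  by (simp add: central_mass_def)

lemma central_mass_neg: "t < 0 \<Longrightarrow> central_mass t = 0"
  by (simp add: central_mass_def)

lemma mono_central_mass: "mono central_mass"
  unfolding mono_def central_mass_def by (auto intro!: std_normal.finite_measure_mono)

lemma central_mass_tendsto_1: "(\<lambda>n. central_mass (real n)) \<longlonglongrightarrow> 1"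
proof -
  have "(\<lambda>n. measure std_normal_measure {- real n..real n}) \<longlonglongrightarrow>
      measure std_normal_measure (\<Union>n. {- real n..real n})"
    by (rule std_normal.finite_Lim_measure_incseq) (auto simp: incseq_def)
  moreover have "(\<Union>n. {- real n..real n}) = UNIV"
  proof (rule sym, rule UNIV_eq_I, rule UN_I)
    fix x :: real
    show "nat \<lceil>\<bar>x\<bar>\<rceil> \<in> UNIV" by simp
    have "\<bar>x\<bar> \<le> real (nat \<lceil>\<bar>x\<bar>\<rceil>)" by (rule real_nat_ceiling_ge)
    then show "x \<in> {- real (nat \<lceil>\<bar>x\<bar>\<rceil>)..real (nat \<lceil>\<bar>x\<bar>\<rceil>)}"
      unfolding atLeastAtMost_iff by linarith
  qed
  moreover have "measure std_normal_measure UNIV = 1"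
    using std_normal.prob_space sets_eq_imp_space_eq[OF sets_std_normal_measure] by simp
  ultimately show ?thesis
    unfolding central_mass_def by simp
qed

lemma central_mass_right_continuous:
  "(\<lambda>n. central_mass (t + inverse (Suc n))) \<longlonglongrightarrow> central_mass t"
proof -
  define I where "I n = {- (t + inverse (Suc n))..t + inverse (Suc n)}" for n
  have "(\<lambda>n. measure std_normal_measure (I n)) \<longlonglongrightarrow> measure std_normal_measure (\<Inter>n. I n)"
  proof (rule std_normal.finite_Lim_measure_decseq)
    show "decseq I"
      unfolding I_def decseq_def by (auto intro: order_trans[OF _ le_imp_inverse_le])
  qed (auto simp: I_def)
  moreover have "(\<Inter>n. I n) = {-t..t}"
  proof (intro antisym subsetI)
    fix x assume x: "x \<in> (\<Inter>n. I n)"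
    have "\<bar>x\<bar> \<le> t + inverse (Suc n)" for n
      using INT_D[OF x UNIV_I, of n] by (simp add: I_def abs_le_iff)
    moreover have "(\<lambda>n. t + inverse (Suc n)) \<longlonglongrightarrow> t + 0"
      by (intro tendsto_add tendsto_const LIMSEQ_inverse_real_of_nat)
    ultimately have "\<bar>x\<bar> \<le> t"
      by (intro LIMSEQ_le_const[of _ t]) auto
    then show "x \<in> {-t..t}" by (simp add: abs_le_iff)
  next
    fix x assume "x \<in> {-t..t}"
    moreover have "0 \<le> inverse (real (Suc n))" for n by simp
    ultimately show "x \<in> (\<Inter>n. I n)"
      unfolding I_def by (smt (verit) INT_I atLeastAtMost_iff)
  qed
  ultimately show ?thesis by (simp add: central_mass_def I_def)
qed

lemma central_mass_greaterThanLessThan: "measure std_normal_measure {-t<..<t} = central_mass t"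
proof (cases "t < 0")
  case False
  have "AE x in lborel. x \<notin> {-t, t}"
    by (intro AE_not_in finite_imp_null_set_lborel) simp
  then have "AE x in lborel. x \<in> {-t, t} \<longrightarrow> ennreal (std_normal_density x) = 0"
    by (rule eventually_mono) simp
  then have "{-t, t} \<in> null_sets std_normal_measure"
    unfolding std_normal_measure_def by (subst null_sets_density_iff) auto
  then have "measure std_normal_measure ({-t<..<t} \<union> {-t, t}) = measure std_normal_measure {-t<..<t}"
    by (intro measure_Un_null_set) simp_all
  moreover have "{-t<..<t} \<union> {-t, t} = {-t..t}" using False by auto
  ultimately show ?thesis by (simp add: central_mass_def)
qed (simp add: central_mass_neg)

lemma le_at_Inf_superlevel:
  fixes f :: "real \<Rightarrow> real"
  assumes "mono f" and right_cont: "\<And>t. (\<lambda>n. f (t + inverse (Suc n))) \<longlonglongrightarrow> f t"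
    and "\<exists>t. c \<le> f t" and "bdd_below {t. c \<le> f t}"
  shows "c \<le> f (Inf {t. c \<le> f t})"
proof (rule LIMSEQ_le_const[OF right_cont], intro exI allI impI)
  fix n :: nat
  let ?S = "{t. c \<le> f t}"
  have "?S \<noteq> {}" using assms(3) by blast
  then have "\<exists>x\<in>?S. x < Inf ?S + inverse (Suc n)"
    by (subst cInf_less_iff[symmetric]) (simp_all add: assms(4))
  then obtain x where x: "c \<le> f x" "x < Inf ?S + inverse (Suc n)"
    by blast
  show "c \<le> f (Inf ?S + inverse (Suc n))"
    using x(1) monoD[OF \<open>mono f\<close> less_imp_le[OF x(2)]] by (rule order_trans)
qed

lemma q_eq_Inf: "q \<beta> k = Inf {t. 1 - \<beta> \<le> central_mass t ^ k}"
  by (simp add: q_def max_abs_cdf_eq_power)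

lemma central_mass_power_superlevel_nonempty:
  assumes "0 < \<beta>"
  shows "\<exists>t. 1 - \<beta> \<le> central_mass t ^ k"
proof -
  have "(\<lambda>n. central_mass (real n) ^ k) \<longlonglongrightarrow> 1 ^ k"
    by (intro tendsto_power central_mass_tendsto_1)
  then have "\<forall>\<^sub>F n in sequentially. 1 - \<beta> < central_mass (real n) ^ k"
    using assms by (intro order_tendstoD(1)) auto
  then show ?thesis
    by (auto simp: eventually_sequentially intro: less_imp_le)
qed

lemma bdd_below_central_mass_power_superlevel:
  assumes "\<beta> < 1" "0 < k"
  shows "bdd_below {t. 1 - \<beta> \<le> central_mass t ^ k}"
proof (rule bdd_belowI)
  fix t assume "t \<in> {t. 1 - \<beta> \<le> central_mass t ^ k}"
  then show "0 \<le> t"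
    using assms central_mass_neg[of t] by (cases "t < 0") (auto simp: zero_power)
qed

lemma central_mass_power_q:
  assumes "0 < \<beta>" "\<beta> < 1" "0 < k"
  shows "1 - \<beta> \<le> central_mass (q \<beta> k) ^ k"
  unfolding q_eq_Inf
proof (rule le_at_Inf_superlevel)
  show "mono (\<lambda>t. central_mass t ^ k)"
    using mono_central_mass by (auto intro!: monoI power_mono central_mass_nonneg dest: monoD)
  show "(\<lambda>n. central_mass (t + inverse (Suc n)) ^ k) \<longlonglongrightarrow> central_mass t ^ k" for t
    by (intro tendsto_power central_mass_right_continuous)
  show "bdd_below {t. 1 - \<beta> \<le> central_mass t ^ k}"
    using assms(2,3) by (rule bdd_below_central_mass_power_superlevel)
qed (rule central_mass_power_superlevel_nonempty[OF assms(1)])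

lemma q_mono:
  assumes "0 < \<beta>" "\<beta> < 1" "0 < k" "k \<le> l"
  shows "q \<beta> k \<le> q \<beta> l"
  unfolding q_eq_Inf
proof (rule cInf_superset_mono)
  show "{t. 1 - \<beta> \<le> central_mass t ^ l} \<noteq> {}"
    using central_mass_power_superlevel_nonempty[OF assms(1)] by blast
  show "bdd_below {t. 1 - \<beta> \<le> central_mass t ^ k}"
    using assms(2,3) by (rule bdd_below_central_mass_power_superlevel)
  have "central_mass t ^ l \<le> central_mass t ^ k" for t
    using \<open>k \<le> l\<close> by (intro power_decreasing central_mass_nonneg central_mass_le_1)
  then show "{t. 1 - \<beta> \<le> central_mass t ^ l} \<subseteq> {t. 1 - \<beta> \<le> central_mass t ^ k}"
    by (auto intro: order_trans)
qed

lemma (in prob_space) prob_std_normal_mem: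
  assumes "distributed M lborel X std_normal_density" "A \<in> sets borel"
  shows "prob {\<omega> \<in> space M. X \<omega> \<in> A} = measure std_normal_measure A"
proof -
  have "prob {\<omega> \<in> space M. X \<omega> \<in> A} = measure (distr M lborel X) A"
    using distributed_measurable[OF assms(1)] assms(2)
    by (subst measure_distr) (auto intro!: arg_cong[where f=prob])
  also have "\<dots> = measure std_normal_measure A"
    using distributed_distr_eq_density[OF assms(1)] by (simp add: std_normal_measure_def)
  finally show ?thesis .
qed

lemma (in prob_space) prob_normal_abs_dev_le:
  assumes "distributed M lborel X (normal_density m \<sigma>)" "0 < \<sigma>"
  shows "prob {\<omega> \<in> space M. \<bar>X \<omega> - m\<bar> \<le> \<sigma> * t} = central_mass t"
proof -
  have "distributed M lborel (\<lambda>\<omega>. (X \<omega> - m) / \<sigma>) std_normal_density"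
    using assms normal_standard_normal_convert by blast
  from prob_std_normal_mem[OF this, of "{-t..t}"] show ?thesis
    using \<open>0 < \<sigma>\<close> by (simp add: central_mass_def abs_le_iff field_simps conj_commute)
qed

lemma (in prob_space) prob_normal_abs_dev_less:
  assumes "distributed M lborel X (normal_density m \<sigma>)" "0 < \<sigma>"
  shows "prob {\<omega> \<in> space M. \<bar>X \<omega> - m\<bar> < \<sigma> * t} = central_mass t"
proof -
  have "distributed M lborel (\<lambda>\<omega>. (X \<omega> - m) / \<sigma>) std_normal_density"
    using assms normal_standard_normal_convert by blast
  from prob_std_normal_mem[OF this, of "{-t<..<t}"] show ?thesis
    using \<open>0 < \<sigma>\<close>
    by (simp add: central_mass_greaterThanLessThan abs_less_iff field_simps conj_commute)
qed

lemma (in prob_space) prob_Int_ge: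
  assumes "A \<in> events" "B \<in> events"
  shows "prob A + prob B - 1 \<le> prob (A \<inter> B)"
proof -
  have "prob (A \<union> B) = prob A + prob B - prob (A \<inter> B)"
    using assms by (intro measure_Un3) (auto simp: fmeasurable_def less_top[symmetric])
  moreover have "prob (A \<union> B) \<le> 1" by simp
  ultimately show ?thesis by simp
qed

lemma (in prob_space) prob_indep_var_Int:
  assumes "indep_var borel X borel Y" "A \<in> sets borel" "B \<in> sets borel"
  shows "prob {\<omega> \<in> space M. X \<omega> \<in> A \<and> Y \<omega> \<in> B}
    = prob {\<omega> \<in> space M. X \<omega> \<in> A} * prob {\<omega> \<in> space M. Y \<omega> \<in> B}"
  using indep_varD[OF assms] by (simp add: vimage_def Int_def conj_commute)

definition selected_mean_covered :: "real \<Rightarrow> real \<Rightarrow> (nat \<Rightarrow> real) \<Rightarrow> (nat \<Rightarrow> real) \<Rightarrow> bool"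
  where "selected_mean_covered \<beta> \<nu> \<mu> y \<longleftrightarrow>
    (let g = gamma_hat (y 1) (y 2);
         c = q \<beta> (card (Gamma_plus \<nu> (y 1) (y 2)))
     in \<mu> g \<in> {y g - c <..< y g + c})"

lemma selected_mean_covered_iff:
  "selected_mean_covered \<beta> \<nu> \<mu> y \<longleftrightarrow>
    (let c = if \<bar>y 2 - y 1\<bar> \<le> 2 * sqrt 2 * q \<nu> 1 then q \<beta> 2 else q \<beta> 1
     in if y 2 \<le> y 1 then \<bar>y 1 - \<mu> 1\<bar> < c else \<bar>y 2 - \<mu> 2\<bar> < c)"
  by (auto simp: selected_mean_covered_def gamma_hat_def Gamma_plus_def Let_def abs_less_iff
      numeral_2_eq_2)

lemma selected_mean_covered_if_unseparated:
  assumes "\<bar>y 2 - y 1\<bar> \<le> 2 * sqrt 2 * q \<nu> 1" "\<bar>y 1 - \<mu> 1\<bar> < q \<beta> 2" "\<bar>y 2 - \<mu> 2\<bar> < q \<beta> 2"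
  shows "selected_mean_covered \<beta> \<nu> \<mu> y"
  using assms by (simp add: selected_mean_covered_iff)

lemma selected_mean_covered_if_selected_close:
  assumes "gamma_hat (y 1) (y 2) = i" "\<bar>y i - \<mu> i\<bar> < q \<beta> 1" "q \<beta> 1 \<le> q \<beta> 2"
  shows "selected_mean_covered \<beta> \<nu> \<mu> y"
  using assms by (auto simp: selected_mean_covered_iff gamma_hat_def Let_def split: if_splits)

locale two_normal_means = prob_space M for M :: "'a measure" +
  fixes Y :: "nat \<Rightarrow> 'a \<Rightarrow> real" and \<mu> :: "nat \<Rightarrow> real"
  assumes distributed_Y1: "distributed M lborel (Y 1) (normal_density (\<mu> 1) 1)"
    and distributed_Y2: "distributed M lborel (Y 2) (normal_density (\<mu> 2) 1)"
    and indep_Y: "indep_var borel (Y 1) borel (Y 2)"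
begin

lemma measurable_Y [measurable]: "Y 1 \<in> borel_measurable M" "Y 2 \<in> borel_measurable M"
  using distributed_measurable[OF distributed_Y1] distributed_measurable[OF distributed_Y2]
  by simp_all

lemma prob_dev_less:
  assumes "i \<in> {1, 2}"
  shows "prob {\<omega> \<in> space M. \<bar>Y i \<omega> - \<mu> i\<bar> < t} = central_mass t"
  using assms prob_normal_abs_dev_less[OF distributed_Y1, of t]
    prob_normal_abs_dev_less[OF distributed_Y2, of t] by auto

lemma prob_both_dev_less:
  "prob {\<omega> \<in> space M. \<bar>Y 1 \<omega> - \<mu> 1\<bar> < t \<and> \<bar>Y 2 \<omega> - \<mu> 2\<bar> < t} = central_mass t ^ 2"
proof -
  have dev: "\<bar>x - m\<bar> < t \<longleftrightarrow> x \<in> {m - t <..< m + t}" for x m :: real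
    by auto
  show ?thesis
    using prob_indep_var_Int[OF indep_Y, of "{\<mu> 1 - t <..< \<mu> 1 + t}" "{\<mu> 2 - t <..< \<mu> 2 + t}"]
      prob_dev_less[of 1 t] prob_dev_less[of 2 t]
    by (simp add: dev power2_eq_square del: greaterThanLessThan_iff)
qed

lemma prob_diff_dev_le:
  "prob {\<omega> \<in> space M. \<bar>(Y 1 \<omega> - Y 2 \<omega>) - (\<mu> 1 - \<mu> 2)\<bar> \<le> sqrt 2 * t} = central_mass t"
proof -
  have "distributed M lborel (\<lambda>\<omega>. Y 1 \<omega> - Y 2 \<omega>) (normal_density (\<mu> 1 - \<mu> 2) (sqrt (1\<^sup>2 + 1\<^sup>2)))"
    using indep_Y distributed_Y1 distributed_Y2 by (intro diff_indep_normal) auto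
  from prob_normal_abs_dev_le[OF this, of t] show ?thesis by simp
qed

lemma prob_selected_mean_covered_ge_of_event:
  assumes "0 < \<nu>" "\<nu> < \<alpha>" "\<alpha> < 1" "H \<in> events" "1 - (\<alpha> - \<nu>) \<le> prob H"
    and covered: "\<And>\<omega>. \<omega> \<in> H \<Longrightarrow> \<bar>(Y 1 \<omega> - Y 2 \<omega>) - (\<mu> 1 - \<mu> 2)\<bar> \<le> sqrt 2 * q \<nu> 1 \<Longrightarrow>
      selected_mean_covered (\<alpha> - \<nu>) \<nu> \<mu> (\<lambda>i. Y i \<omega>)"
  shows "1 - \<alpha> \<le> prob {\<omega> \<in> space M. selected_mean_covered (\<alpha> - \<nu>) \<nu> \<mu> (\<lambda>i. Y i \<omega>)}"
    (is "_ \<le> prob ?C")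
proof -
  define Close where
    "Close = {\<omega> \<in> space M. \<bar>(Y 1 \<omega> - Y 2 \<omega>) - (\<mu> 1 - \<mu> 2)\<bar> \<le> sqrt 2 * q \<nu> 1}"
  have "Close \<in> events" "?C \<in> events"
    unfolding Close_def selected_mean_covered_iff Let_def by measurable
  moreover have "1 - \<nu> \<le> prob Close"
    using central_mass_power_q[of \<nu> 1] prob_diff_dev_le[of "q \<nu> 1"] assms(1-3)
    by (simp add: Close_def)
  moreover have "Close \<inter> H \<subseteq> ?C"
    using covered by (auto simp: Close_def)
  ultimately show ?thesis
    using prob_Int_ge[of Close H] finite_measure_mono[of "Close \<inter> H" ?C] assms(4,5) by simp
qed

lemma prob_selected_mean_covered:
  assumes "0 < \<nu>" "\<nu> < \<alpha>" "\<alpha> < 1"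
  shows "1 - \<alpha> \<le> prob {\<omega> \<in> space M. selected_mean_covered (\<alpha> - \<nu>) \<nu> \<mu> (\<lambda>i. Y i \<omega>)}"
proof -
  define s where "s = sqrt 2 * q \<nu> 1"
  let ?\<beta> = "\<alpha> - \<nu>"
  have \<beta>: "0 < ?\<beta>" "?\<beta> < 1" "q ?\<beta> 1 \<le> q ?\<beta> 2"
    using assms q_mono[of ?\<beta> 1 2] by auto
  note prob_ge = prob_selected_mean_covered_ge_of_event[OF assms, folded s_def]
  consider "\<bar>\<mu> 1 - \<mu> 2\<bar> \<le> s" | "s < \<mu> 1 - \<mu> 2" | "s < \<mu> 2 - \<mu> 1" by linarith
  then show ?thesis
  proof cases
    case 1
    show ?thesis
    proof (rule prob_ge[of "{\<omega> \<in> space M. \<bar>Y 1 \<omega> - \<mu> 1\<bar> < q ?\<beta> 2 \<and> \<bar>Y 2 \<omega> - \<mu> 2\<bar> < q ?\<beta> 2}"])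
      show "1 - ?\<beta> \<le> prob {\<omega> \<in> space M. \<bar>Y 1 \<omega> - \<mu> 1\<bar> < q ?\<beta> 2 \<and> \<bar>Y 2 \<omega> - \<mu> 2\<bar> < q ?\<beta> 2}"
        unfolding prob_both_dev_less using central_mass_power_q[of ?\<beta> 2] \<beta> by simp
    qed (measurable, use 1 in \<open>auto simp: s_def intro!: selected_mean_covered_if_unseparated\<close>)
  next
    case 2
    show ?thesis
    proof (rule prob_ge[of "{\<omega> \<in> space M. \<bar>Y 1 \<omega> - \<mu> 1\<bar> < q ?\<beta> 1}"])
      show "1 - ?\<beta> \<le> prob {\<omega> \<in> space M. \<bar>Y 1 \<omega> - \<mu> 1\<bar> < q ?\<beta> 1}"
        using central_mass_power_q[of ?\<beta> 1] \<beta> by (simp add: prob_dev_less)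
    qed (measurable, use 2 \<beta>(3) in \<open>auto simp: gamma_hat_def
          intro!: selected_mean_covered_if_selected_close[where i = 1]\<close>)
  next
    case 3
    show ?thesis
    proof (rule prob_ge[of "{\<omega> \<in> space M. \<bar>Y 2 \<omega> - \<mu> 2\<bar> < q ?\<beta> 1}"])
      show "1 - ?\<beta> \<le> prob {\<omega> \<in> space M. \<bar>Y 2 \<omega> - \<mu> 2\<bar> < q ?\<beta> 1}"
        using central_mass_power_q[of ?\<beta> 1] \<beta> by (simp add: prob_dev_less)
    qed (measurable, use 3 \<beta>(3) in \<open>auto simp: gamma_hat_def
          intro!: selected_mean_covered_if_selected_close[where i = 2]\<close>)
  qed
qed

end

theorem mainTheorem9:
  fixes M :: "'a measure" and Y :: "nat \<Rightarrow> 'a \<Rightarrow> real" and \<mu> :: "nat \<Rightarrow> real"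
    and \<alpha> \<nu> :: real
  assumes "prob_space M"
    and "distributed M lborel (Y 1) (\<lambda>x. ennreal (normal_density (\<mu> 1) 1 x))"
    and "distributed M lborel (Y 2) (\<lambda>x. ennreal (normal_density (\<mu> 2) 1 x))"
    and "prob_space.indep_var M borel (Y 1) borel (Y 2)"
    and "0 < \<alpha>" and "\<alpha> < 1" and "0 < \<nu>" and "\<nu> < \<alpha>"
  shows "measure M {\<omega> \<in> space M.
           (let g = gamma_hat (Y 1 \<omega>) (Y 2 \<omega>);
                c = q (\<alpha> - \<nu>) (card (Gamma_plus \<nu> (Y 1 \<omega>) (Y 2 \<omega>)))
            in \<mu> g \<in> {Y g \<omega> - c <..< Y g \<omega> + c})} \<ge> 1 - \<alpha>"
proof -
  interpret two_normal_means M Y \<mu>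
    using assms(1-4) by (simp add: two_normal_means_def two_normal_means_axioms_def)
  show ?thesis
    using prob_selected_mean_covered[OF assms(7,8,6)] by (simp add: selected_mean_covered_def)
qed

end
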